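(* Let $1\le p<\infty$ and let $d_{w,p}$ be a Lorentz sequence space. The formal identity operator $j\colon\ell_p\to d_{w,p}$ is finitely strictly singular.
   Context: Let $1\le p<\infty$ and let $w=(w_n)$ be a real sequence with $w_1=1$, $w_n\downarrow 0$ and $\sum_n w_n=\infty$. The Lorentz sequence space $d_{w,p}$ is the Banach space of all $x=(x_n)\in c_0$ with $\|x\|_{d_{w,p}}=\big(\sum_{n}w_n (x^*_n)^p\big)^{1/p}<\infty$, where $(x^*_n)$ is the non-increasing rearrangement of $(|x_n|)$. The formal identity $j\colon\ell_p\to d_{w,p}$ maps the $n$-th unit vector of $\ell_p$ to the $n$-th unit vector of $d_{w,p}$. An operator $T\colon X\to Y$ is finitely strictly singular if for every $\varepsilon>0$ there is $N\in\mathbb N$ such that every subspace $Z\subseteq X$ with $\dim Z\ge N$ contains $z$ with $\|Tz\|<\varepsilon\|z\|$. *)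

theory Defs
  imports "HOL-Analysis.Analysis"
begin

text \<open>Real sequences are functions nat => real; index 0 plays the role of index 1 of the paper.\<close>

definition lp_space :: "real \<Rightarrow> (nat \<Rightarrow> real) set" where
  "lp_space p = {x. summable (\<lambda>n. \<bar>x n\<bar> powr p)}"

definition lp_norm :: "real \<Rightarrow> (nat \<Rightarrow> real) \<Rightarrow> real" where
  "lp_norm p x = (\<Sum>n. \<bar>x n\<bar> powr p) powr (1 / p)"

text \<open>Non-increasing rearrangement of (|x_n|) (for x in c_0):
  x*_n = inf { t >= 0 : at most n indices k have |x_k| > t }.\<close>
definition decr_rearr :: "(nat \<Rightarrow> real) \<Rightarrow> nat \<Rightarrow> real" where
  "decr_rearr x n = Inf {t. 0 \<le> t \<and> finite {k. \<bar>x k\<bar> > t} \<and> card {k. \<bar>x k\<bar> > t} \<le> n}"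

definition lorentz_space :: "(nat \<Rightarrow> real) \<Rightarrow> real \<Rightarrow> (nat \<Rightarrow> real) set" where
  "lorentz_space w p = {x. x \<longlonglongrightarrow> 0 \<and> summable (\<lambda>n. w n * (decr_rearr x n) powr p)}"

definition lorentz_norm :: "(nat \<Rightarrow> real) \<Rightarrow> real \<Rightarrow> (nat \<Rightarrow> real) \<Rightarrow> real" where
  "lorentz_norm w p x = (\<Sum>n. w n * (decr_rearr x n) powr p) powr (1 / p)"

definition is_lorentz_weight :: "(nat \<Rightarrow> real) \<Rightarrow> bool" where
  "is_lorentz_weight w \<longleftrightarrow> w 0 = 1 \<and> decseq w \<and> w \<longlonglongrightarrow> 0 \<and> \<not> summable w"

definition seq_subspace :: "(nat \<Rightarrow> real) set \<Rightarrow> bool" where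
  "seq_subspace Z \<longleftrightarrow> (\<lambda>k. 0) \<in> Z \<and> (\<forall>x\<in>Z. \<forall>y\<in>Z. (\<lambda>k. x k + y k) \<in> Z)
     \<and> (\<forall>c. \<forall>x\<in>Z. (\<lambda>k. c * x k) \<in> Z)"

definition dim_at_least :: "(nat \<Rightarrow> real) set \<Rightarrow> nat \<Rightarrow> bool" where
  "dim_at_least Z N \<longleftrightarrow> (\<exists>v :: nat \<Rightarrow> nat \<Rightarrow> real. (\<forall>i<N. v i \<in> Z) \<and>
     (\<forall>c :: nat \<Rightarrow> real. (\<lambda>k. \<Sum>i<N. c i * v i k) = (\<lambda>k. 0) \<longrightarrow> (\<forall>i<N. c i = 0)))"

definition fin_strictly_singular ::
  "(nat \<Rightarrow> real) set \<Rightarrow> ((nat \<Rightarrow> real) \<Rightarrow> real) \<Rightarrow> ((nat \<Rightarrow> real) \<Rightarrow> real)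
     \<Rightarrow> ((nat \<Rightarrow> real) \<Rightarrow> (nat \<Rightarrow> real)) \<Rightarrow> bool" where
  "fin_strictly_singular X nX nY T \<longleftrightarrow>
     (\<forall>\<epsilon>>0. \<exists>N. \<forall>Z. seq_subspace Z \<and> Z \<subseteq> X \<and> dim_at_least Z N \<longrightarrow>
        (\<exists>z\<in>Z. nY (T z) < \<epsilon> * nX z))"

end

theory Submission
  imports Defs
begin

text \<open>
  Every \<open>N\<close>-dimensional subspace of \<open>c\<^sub>0\<close> contains a vector \<open>z\<close> with \<open>\<bar>z k\<bar> \<le> 1\<close> for all \<open>k\<close>
  and \<open>\<bar>z k\<bar> = 1\<close> for \<open>N\<close> distinct \<open>k\<close>: starting from \<open>0\<close>, a vector vanishing on the coordinates
  already equal to \<open>\<plusminus>1\<close> is added with the largest coefficient that keeps the sup norm at most \<open>1\<close>,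
  which creates one more such coordinate. For this \<open>z\<close> the \<open>\<ell>\<^sub>p\<close> sum is at least \<open>N\<close>, while all
  entries of its decreasing rearrangement are at most \<open>1\<close>, so
  \<open>\<Sum>\<^sub>n w\<^sub>n (z\<^sup>*\<^sub>n)\<^sup>p \<le> K + w\<^sub>K \<Sum>\<^sub>k \<bar>z\<^sub>k\<bar>\<^sup>p\<close>. Since \<open>w\<^sub>K \<longrightarrow> 0\<close>, the Lorentz norm of \<open>z\<close> is
  a small multiple of its \<open>\<ell>\<^sub>p\<close> norm once \<open>N\<close> is large compared to \<open>K\<close>.
\<close>

lemma lp_space_imp_LIMSEQ_zero:
  assumes "0 < p" and "x \<in> lp_space p"
  shows "x \<longlonglongrightarrow> 0"
proof -
  have "(\<lambda>n. \<bar>x n\<bar> powr p) \<longlonglongrightarrow> 0"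
    using assms(2) by (simp add: lp_space_def summable_LIMSEQ_zero)
  then have "(\<lambda>n. (\<bar>x n\<bar> powr p) powr (1/p)) \<longlonglongrightarrow> 0"
    by (rule tendsto_zero_powrI[where g="\<lambda>_. 1/p" and b="1/p"]) (use assms(1) in auto)
  then have "(\<lambda>n. \<bar>x n\<bar>) \<longlonglongrightarrow> 0"
    using assms(1) by (simp add: powr_powr)
  then show ?thesis by (simp add: tendsto_rabs_zero_iff)
qed

lemma LIMSEQ_zero_imp_abs_attains_max:
  fixes x :: "nat \<Rightarrow> real"
  assumes "x \<longlonglongrightarrow> 0"
  shows "\<exists>k0. \<forall>k. \<bar>x k\<bar> \<le> \<bar>x k0\<bar>"
proof (cases "\<forall>k. x k = 0")
  case False
  then obtain j where "\<bar>x j\<bar> > 0" by auto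
  with assms have "\<forall>\<^sub>F k in sequentially. dist (x k) 0 < \<bar>x j\<bar>"
    by (simp add: tendsto_iff)
  then obtain M where M: "\<And>k. k \<ge> M \<Longrightarrow> \<bar>x k\<bar> < \<bar>x j\<bar>"
    by (auto simp: eventually_sequentially)
  define S where "S = {..max M j}"
  have "Max ((\<lambda>k. \<bar>x k\<bar>) ` S) \<in> (\<lambda>k. \<bar>x k\<bar>) ` S"
    by (simp add: S_def)
  then obtain k0 where k0: "k0 \<in> S" "\<bar>x k0\<bar> = Max ((\<lambda>k. \<bar>x k\<bar>) ` S)" by auto
  have k0_max: "\<bar>x k\<bar> \<le> \<bar>x k0\<bar>" if "k \<in> S" for k
    using k0(2) that by (simp add: S_def)
  have "\<bar>x k\<bar> \<le> \<bar>x k0\<bar>" for k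
  proof (cases "k \<in> S")
    case False
    then have "\<bar>x k\<bar> < \<bar>x j\<bar>" by (intro M) (auto simp: S_def)
    also have "\<bar>x j\<bar> \<le> \<bar>x k0\<bar>" by (rule k0_max) (auto simp: S_def)
    finally show ?thesis by simp
  qed (rule k0_max)
  then show ?thesis by blast
qed auto

section \<open>The decreasing rearrangement\<close>

definition rearr_levels :: "(nat \<Rightarrow> real) \<Rightarrow> nat \<Rightarrow> real set" where
  "rearr_levels x n = {t. 0 \<le> t \<and> finite {k. \<bar>x k\<bar> > t} \<and> card {k. \<bar>x k\<bar> > t} \<le> n}"

lemma decr_rearr_eq_Inf_rearr_levels: "decr_rearr x n = Inf (rearr_levels x n)"
  by (simp add: decr_rearr_def rearr_levels_def)

lemma abs_max_in_rearr_levels: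
  assumes "\<And>k. \<bar>x k\<bar> \<le> \<bar>x k0\<bar>"
  shows "\<bar>x k0\<bar> \<in> rearr_levels x n"
proof -
  have "{k. \<bar>x k\<bar> > \<bar>x k0\<bar>} = {}" using assms by (auto simp: not_less)
  then show ?thesis by (simp add: rearr_levels_def)
qed

lemma decr_rearr_bounds:
  assumes "\<And>k. \<bar>x k\<bar> \<le> \<bar>x k0\<bar>"
  shows "0 \<le> decr_rearr x n" and "decr_rearr x n \<le> \<bar>x k0\<bar>"
proof -
  note max_in = abs_max_in_rearr_levels[of x k0 n, OF assms]
  show "0 \<le> decr_rearr x n" unfolding decr_rearr_eq_Inf_rearr_levels
    by (rule cInf_greatest) (use max_in in \<open>auto simp: rearr_levels_def\<close>)
  show "decr_rearr x n \<le> \<bar>x k0\<bar>" unfolding decr_rearr_eq_Inf_rearr_levels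
    by (rule cInf_lower[OF max_in]) (auto simp: rearr_levels_def bdd_below_def)
qed

lemma decr_rearr_0:
  assumes "\<And>k. \<bar>x k\<bar> \<le> \<bar>x k0\<bar>"
  shows "decr_rearr x 0 = \<bar>x k0\<bar>"
  unfolding decr_rearr_eq_Inf_rearr_levels
proof (rule cInf_eq_minimum[OF abs_max_in_rearr_levels[of x k0, OF assms]])
  fix t assume "t \<in> rearr_levels x 0"
  then have "{k. \<bar>x k\<bar> > t} = {}" by (auto simp: rearr_levels_def)
  then show "\<bar>x k0\<bar> \<le> t" by (auto simp: not_less)
qed

lemma decr_rearr_remove_max:
  assumes "\<And>k. \<bar>x k\<bar> \<le> \<bar>x k0\<bar>"
  shows "decr_rearr (x(k0 := 0)) n = decr_rearr x (Suc n)"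
proof -
  have "t \<in> rearr_levels (x(k0 := 0)) n \<longleftrightarrow> t \<in> rearr_levels x (Suc n)" if "0 \<le> t" for t
  proof -
    define S where "S = {k. \<bar>x k\<bar> > t}"
    have "{k. \<bar>(x(k0 := 0)) k\<bar> > t} = S - {k0}" using that by (auto simp: S_def)
    then have lhs: "t \<in> rearr_levels (x(k0 := 0)) n \<longleftrightarrow> finite S \<and> card (S - {k0}) \<le> n"
      using that by (simp add: rearr_levels_def)
    have rhs: "t \<in> rearr_levels x (Suc n) \<longleftrightarrow> finite S \<and> card S \<le> Suc n"
      using that by (simp add: rearr_levels_def S_def)
    show ?thesis
    proof (cases "k0 \<in> S")
      case True
      then show ?thesis
        unfolding lhs rhs by (auto simp: card_Diff_singleton card_gt_0_iff Suc_le_eq)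
    next
      case False
      then have "\<bar>x k\<bar> \<le> t" for k using assms[of k] by (simp add: S_def not_less)
      then have "S = {}" by (auto simp: S_def not_less)
      then show ?thesis unfolding lhs rhs by simp
    qed
  qed
  moreover have "t \<notin> rearr_levels (x(k0 := 0)) n \<and> t \<notin> rearr_levels x (Suc n)" if "t < 0" for t
    using that by (simp add: rearr_levels_def)
  ultimately have "rearr_levels (x(k0 := 0)) n = rearr_levels x (Suc n)"
    by (meson set_eqI not_le)
  then show ?thesis by (simp add: decr_rearr_eq_Inf_rearr_levels)
qed

lemma sum_decr_rearr_powr_le_finite_sum:
  fixes x :: "nat \<Rightarrow> real"
  assumes "x \<longlonglongrightarrow> 0"
  shows "\<exists>K. finite K \<and> (\<Sum>n<m. decr_rearr x n powr p) \<le> (\<Sum>k\<in>K. \<bar>x k\<bar> powr p)"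
  using assms
proof (induction m arbitrary: x)
  case (Suc m)
  obtain k0 where k0: "\<And>k. \<bar>x k\<bar> \<le> \<bar>x k0\<bar>"
    using LIMSEQ_zero_imp_abs_attains_max[OF Suc.prems] by blast
  define x' where "x' = x(k0 := 0)"
  have "\<forall>\<^sub>F n in sequentially. x n = x' n"
    unfolding eventually_sequentially x'_def by (intro exI[of _ "Suc k0"]) auto
  then have "x' \<longlonglongrightarrow> 0" using Suc.prems by (rule tendsto_cong[THEN iffD1])
  then obtain K where K: "finite K"
    and IH: "(\<Sum>n<m. decr_rearr x' n powr p) \<le> (\<Sum>k\<in>K. \<bar>x' k\<bar> powr p)"
    using Suc.IH by blast
  have "(\<Sum>n<Suc m. decr_rearr x n powr p) = \<bar>x k0\<bar> powr p + (\<Sum>n<m. decr_rearr x' n powr p)"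
    unfolding sum.lessThan_Suc_shift
    by (simp add: decr_rearr_0[of x k0, OF k0] decr_rearr_remove_max[of x k0, OF k0] x'_def)
  also have "\<dots> \<le> \<bar>x k0\<bar> powr p + (\<Sum>k\<in>K - {k0}. \<bar>x k\<bar> powr p)"
  proof -
    have "(\<Sum>k\<in>K. \<bar>x' k\<bar> powr p) = (\<Sum>k\<in>K - {k0}. \<bar>x' k\<bar> powr p)"
      by (rule sum.mono_neutral_right) (auto simp: K x'_def)
    also have "\<dots> = (\<Sum>k\<in>K - {k0}. \<bar>x k\<bar> powr p)"
      by (rule sum.cong) (auto simp: x'_def)
    finally show ?thesis using IH by simp
  qed
  also have "\<dots> = (\<Sum>k\<in>insert k0 K. \<bar>x k\<bar> powr p)"
    using K by (simp add: sum.insert_remove)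
  finally show ?case using K by blast
qed (intro exI[of _ "{}"], simp)

lemma sum_decr_rearr_powr_le_suminf:
  assumes "0 < p" and "x \<in> lp_space p"
  shows "(\<Sum>n<m. decr_rearr x n powr p) \<le> (\<Sum>k. \<bar>x k\<bar> powr p)"
proof -
  obtain K where "finite K" and "(\<Sum>n<m. decr_rearr x n powr p) \<le> (\<Sum>k\<in>K. \<bar>x k\<bar> powr p)"
    using sum_decr_rearr_powr_le_finite_sum[OF lp_space_imp_LIMSEQ_zero[OF assms]] by blast
  moreover have "(\<Sum>k\<in>K. \<bar>x k\<bar> powr p) \<le> (\<Sum>k. \<bar>x k\<bar> powr p)"
    by (rule sum_le_suminf) (use assms(2) \<open>finite K\<close> in \<open>auto simp: lp_space_def\<close>)
  ultimately show ?thesis by linarith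
qed

lemma lorentz_weight_nonneg: "is_lorentz_weight w \<Longrightarrow> 0 \<le> w n"
  by (intro decseq_ge) (auto simp: is_lorentz_weight_def)

lemma lorentz_weight_antimono: "is_lorentz_weight w \<Longrightarrow> m \<le> n \<Longrightarrow> w n \<le> w m"
  by (simp add: is_lorentz_weight_def decseqD)

lemma lorentz_weight_le_1: "is_lorentz_weight w \<Longrightarrow> w n \<le> 1"
  using lorentz_weight_antimono[of w 0 n] by (simp add: is_lorentz_weight_def)

lemma lp_space_subset_lorentz_space:
  assumes "0 < p" and w: "is_lorentz_weight w"
  shows "lp_space p \<subseteq> lorentz_space w p"
proof
  fix x assume x: "x \<in> lp_space p"
  have "(\<Sum>n\<le>m. w n * decr_rearr x n powr p) \<le> (\<Sum>k. \<bar>x k\<bar> powr p)" for m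
  proof -
    have "(\<Sum>n\<le>m. w n * decr_rearr x n powr p) \<le> (\<Sum>n<Suc m. decr_rearr x n powr p)"
      unfolding lessThan_Suc_atMost
      by (intro sum_mono mult_left_le_one_le)
         (auto simp: lorentz_weight_nonneg[OF w] lorentz_weight_le_1[OF w])
    also have "\<dots> \<le> (\<Sum>k. \<bar>x k\<bar> powr p)"
      by (rule sum_decr_rearr_powr_le_suminf[OF assms(1) x])
    finally show ?thesis .
  qed
  then have "summable (\<lambda>n. w n * decr_rearr x n powr p)"
    by (intro bounded_imp_summable) (simp add: lorentz_weight_nonneg[OF w])
  then show "x \<in> lorentz_space w p"
    using lp_space_imp_LIMSEQ_zero[OF assms(1) x] by (simp add: lorentz_space_def)
qed

section \<open>Finite-dimensional subspaces\<close>

lemma seq_subspace_sum: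
  assumes Z: "seq_subspace Z" and "finite I" and "\<And>i. i \<in> I \<Longrightarrow> v i \<in> Z"
  shows "(\<lambda>k. \<Sum>i\<in>I. c i * v i k) \<in> Z"
  using assms(2,3)
proof (induction I rule: finite_induct)
  case (insert i I)
  then have "(\<lambda>k. c i * v i k + (\<Sum>i\<in>I. c i * v i k)) \<in> Z"
    using Z by (simp add: seq_subspace_def)
  then show ?case using insert.hyps by simp
qed (use Z in \<open>simp add: seq_subspace_def\<close>)

text \<open>More unknowns than equations: Gaussian elimination of one coordinate at a time.\<close>

lemma exists_nontrivial_combination_vanishing_on:
  fixes A I :: "nat set" and v :: "nat \<Rightarrow> nat \<Rightarrow> real"
  assumes "finite A" and "finite I" and "card A < card I"
  shows "\<exists>c. (\<exists>i\<in>I. c i \<noteq> 0) \<and> (\<forall>k\<in>A. (\<Sum>i\<in>I. c i * v i k) = 0)"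
  using assms
proof (induction A arbitrary: I v rule: finite_induct)
  case empty
  then obtain i where "i \<in> I" by (metis card.empty card_gt_0_iff ex_in_conv)
  then show ?case by (intro exI[of _ "\<lambda>_. 1"]) auto
next
  case (insert k B I v)
  show ?case
  proof (cases "\<forall>i\<in>I. v i k = 0")
    case True
    then show ?thesis using insert.IH[of I v] insert.prems insert.hyps by auto
  next
    case False
    then obtain i0 where i0: "i0 \<in> I" "v i0 k \<noteq> 0" by auto
    define I' where "I' = I - {i0}"
    define u where "u i k' = v i k' - v i k / v i0 k * v i0 k'" for i k'
    have I: "I = insert i0 I'" "i0 \<notin> I'" "finite I'"
      using i0 insert.prems by (auto simp: I'_def)
    have "card B < card I'" using insert.prems insert.hyps I by simp
    then obtain c' where c': "\<exists>i\<in>I'. c' i \<noteq> 0" "\<forall>k'\<in>B. (\<Sum>i\<in>I'. c' i * u i k') = 0"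
      using insert.IH[of I' u] I(3) by blast
    define c where "c = c'(i0 := - (\<Sum>i\<in>I'. c' i * v i k) / v i0 k)"
    have comb: "(\<Sum>i\<in>I. c i * v i k') = (\<Sum>i\<in>I'. c' i * u i k')" for k'
    proof -
      have "(\<Sum>i\<in>I'. c i * v i k') = (\<Sum>i\<in>I'. c' i * v i k')"
        using I(2) by (intro sum.cong) (auto simp: c_def)
      then have "(\<Sum>i\<in>I. c i * v i k') = c i0 * v i0 k' + (\<Sum>i\<in>I'. c' i * v i k')"
        using I by simp
      also have "\<dots> = (\<Sum>i\<in>I'. c' i * u i k')"
        unfolding u_def c_def using i0(2)
        by (simp add: algebra_simps sum_subtractf sum_distrib_left sum_divide_distrib sum_distrib_right)
      finally show ?thesis .
    qed
    have "u i k = 0" for i using i0(2) by (simp add: u_def)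
    then have "\<forall>k'\<in>insert k B. (\<Sum>i\<in>I. c i * v i k') = 0" using c'(2) by (simp add: comb)
    moreover have "\<exists>i\<in>I. c i \<noteq> 0" using c'(1) I by (auto simp: c_def)
    ultimately show ?thesis by blast
  qed
qed

lemma dim_at_least_imp_exists_vanishing_on:
  assumes Z: "seq_subspace Z" and dim: "dim_at_least Z N"
    and "finite A" and "card A < N"
  shows "\<exists>y\<in>Z. y \<noteq> (\<lambda>k. 0) \<and> (\<forall>k\<in>A. y k = 0)"
proof -
  obtain v where vZ: "\<And>i. i < N \<Longrightarrow> v i \<in> Z" and
    indep: "\<And>c. (\<lambda>k. \<Sum>i<N. c i * v i k) = (\<lambda>k. 0) \<Longrightarrow> \<forall>i<N. c i = 0"
    using dim unfolding dim_at_least_def by blast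
  obtain c where "\<exists>i\<in>{..<N}. c i \<noteq> 0" and "\<forall>k\<in>A. (\<Sum>i\<in>{..<N}. c i * v i k) = 0"
    using exists_nontrivial_combination_vanishing_on[of A "{..<N}" v] assms(3,4) by auto
  moreover have "(\<lambda>k. \<Sum>i<N. c i * v i k) \<in> Z"
    using vZ by (intro seq_subspace_sum[OF Z]) auto
  ultimately show ?thesis using indep by (intro bexI) auto
qed

section \<open>Vectors with many peaks\<close>

lemma abs_add_divide_le_one_iff:
  fixes a b S :: real
  assumes "\<bar>a\<bar> < 1" and "0 < S"
  shows "\<bar>a + b / S\<bar> \<le> 1 \<longleftrightarrow> max (b / (1 - a)) (- b / (1 + a)) \<le> S"
proof -
  have "0 < 1 - a" "0 < 1 + a" using assms(1) by auto
  then show ?thesis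
    using assms(2) by (auto simp: abs_le_iff pos_divide_le_eq field_simps)
qed

lemma abs_add_divide_eq_one:
  fixes a b S :: real
  assumes "\<bar>a\<bar> < 1" and "0 < S" and "max (b / (1 - a)) (- b / (1 + a)) = S"
  shows "\<bar>a + b / S\<bar> = 1"
proof -
  have "0 < 1 - a" "0 < 1 + a" using assms(1) by auto
  with assms(2,3) have "b = S * (1 - a) \<or> - b = S * (1 + a)"
    by (auto simp: max_def field_simps split: if_splits)
  then show ?thesis using assms(2) by (auto simp: field_simps)
qed

lemma max_divide_pos:
  fixes a b :: real
  assumes "\<bar>a\<bar> < 1" and "b \<noteq> 0"
  shows "0 < max (b / (1 - a)) (- b / (1 + a))"
proof -
  have "0 < 1 - a" "0 < 1 + a" using assms(1) by auto
  consider "b > 0" | "b < 0" using assms(2) linorder_neqE_linordered_idom by blast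
  then show ?thesis
  proof cases
    case 1
    then have "0 < b / (1 - a)" using \<open>0 < 1 - a\<close> by simp
    then show ?thesis by (simp add: less_max_iff_disj)
  next
    case 2
    then have "0 < - b / (1 + a)" using \<open>0 < 1 + a\<close> by (simp add: divide_neg_pos)
    then show ?thesis by (simp add: less_max_iff_disj)
  qed
qed

lemma max_divide_nonneg:
  fixes a b :: real
  assumes "\<bar>a\<bar> < 1"
  shows "0 \<le> max (b / (1 - a)) (- b / (1 + a))"
proof (cases "b = 0")
  case False
  then show ?thesis using max_divide_pos[OF assms] by (simp add: less_imp_le)
qed simp

text \<open>
  The largest \<open>t\<close> with \<open>\<bar>z + t y\<bar> \<le> 1\<close> is \<open>1 / S\<close>, where \<open>S\<close> is the maximum over \<open>k\<close> of the
  ratios below; it is attained because the ratios tend to \<open>0\<close>.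
\<close>

lemma exists_perturbation_with_new_peak:
  fixes y z :: "nat \<Rightarrow> real"
  assumes "y \<longlonglongrightarrow> 0" and "z \<longlonglongrightarrow> 0"
    and z_lt: "\<And>k. k \<notin> A \<Longrightarrow> \<bar>z k\<bar> < 1" and y_A: "\<And>k. k \<in> A \<Longrightarrow> y k = 0"
    and "y j \<noteq> 0"
  shows "\<exists>t. (\<forall>k. k \<notin> A \<longrightarrow> \<bar>z k + t * y k\<bar> \<le> 1) \<and> (\<exists>k1. k1 \<notin> A \<and> \<bar>z k1 + t * y k1\<bar> = 1)"
proof -
  define s where "s k = max (y k / (1 - z k)) (- y k / (1 + z k))" for k
  have "s \<longlonglongrightarrow> max (0 / (1 - 0)) (- 0 / (1 + 0))"
    unfolding s_def by (intro tendsto_intros assms(1,2)) auto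
  then have "s \<longlonglongrightarrow> 0" by simp
  then obtain k1 where k1: "\<And>k. \<bar>s k\<bar> \<le> \<bar>s k1\<bar>"
    using LIMSEQ_zero_imp_abs_attains_max by blast
  have s_nonneg: "0 \<le> s k" for k
  proof (cases "k \<in> A")
    case False
    then show ?thesis unfolding s_def by (rule max_divide_nonneg[OF z_lt])
  qed (simp add: s_def y_A)
  define S where "S = s k1"
  have s_le: "s k \<le> S" for k
    using k1[of k] s_nonneg[of k] s_nonneg[of k1] by (simp add: S_def)
  have "j \<notin> A" using \<open>y j \<noteq> 0\<close> y_A by blast
  then have "0 < s j" unfolding s_def by (rule max_divide_pos[OF z_lt \<open>y j \<noteq> 0\<close>])
  then have "0 < S" using s_le[of j] by simp
  have "k1 \<notin> A"
  proof
    assume "k1 \<in> A"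
    then have "S = 0" by (simp add: S_def s_def y_A)
    with \<open>0 < S\<close> show False by simp
  qed
  have "\<bar>z k + 1 / S * y k\<bar> \<le> 1" if "k \<notin> A" for k
    using abs_add_divide_le_one_iff[OF z_lt[OF that] \<open>0 < S\<close>, of "y k"] s_le[of k]
    by (simp add: s_def)
  moreover have "\<bar>z k1 + 1 / S * y k1\<bar> = 1"
    using abs_add_divide_eq_one[OF z_lt[OF \<open>k1 \<notin> A\<close>] \<open>0 < S\<close>, of "y k1"]
    by (simp add: S_def s_def)
  ultimately show ?thesis using \<open>k1 \<notin> A\<close> by blast
qed

lemma exists_vector_with_peaks:
  assumes "0 < p" and Z: "seq_subspace Z" and Z_lp: "Z \<subseteq> lp_space p"
    and dim: "dim_at_least Z N" and "a \<le> N"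
  shows "\<exists>z\<in>Z. (\<forall>k. \<bar>z k\<bar> \<le> 1) \<and> (\<exists>A. finite A \<and> card A = a \<and> (\<forall>k\<in>A. \<bar>z k\<bar> = 1))"
  using \<open>a \<le> N\<close>
proof (induction a)
  case 0
  have "(\<lambda>k. 0) \<in> Z" using Z by (simp add: seq_subspace_def)
  then show ?case by (intro bexI[of _ "\<lambda>k. 0"]) (auto intro!: exI[of _ "{}"])
next
  case (Suc a)
  then obtain z A where zZ: "z \<in> Z" and z_le: "\<And>k. \<bar>z k\<bar> \<le> 1" and A: "finite A" "card A = a"
    and z_A: "\<And>k. k \<in> A \<Longrightarrow> \<bar>z k\<bar> = 1" by auto
  show ?case
  proof (cases "\<exists>j. j \<notin> A \<and> \<bar>z j\<bar> = 1")
    case True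
    then obtain j where "j \<notin> A" "\<bar>z j\<bar> = 1" by auto
    then show ?thesis using zZ z_le A z_A
      by (intro bexI[of _ z] conjI exI[of _ "insert j A"]) auto
  next
    case False
    then have z_lt: "\<And>k. k \<notin> A \<Longrightarrow> \<bar>z k\<bar> < 1" using z_le by (meson order_le_imp_less_or_eq)
    obtain y where yZ: "y \<in> Z" and "y \<noteq> (\<lambda>k. 0)" and y_A: "\<And>k. k \<in> A \<Longrightarrow> y k = 0"
      using dim_at_least_imp_exists_vanishing_on[OF Z dim A(1)] A(2) Suc.prems by auto
    then obtain j where "y j \<noteq> 0" by auto
    have "y \<longlonglongrightarrow> 0" "z \<longlonglongrightarrow> 0"
      using lp_space_imp_LIMSEQ_zero[OF \<open>0 < p\<close>] yZ zZ Z_lp by auto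
    then obtain t k1 where t_le: "\<And>k. k \<notin> A \<Longrightarrow> \<bar>z k + t * y k\<bar> \<le> 1"
      and "k1 \<notin> A" and t_k1: "\<bar>z k1 + t * y k1\<bar> = 1"
      using exists_perturbation_with_new_peak[of y z A, OF _ _ z_lt y_A \<open>y j \<noteq> 0\<close>] by blast
    define z' where "z' = (\<lambda>k. z k + t * y k)"
    have "z' \<in> Z" using Z yZ zZ by (simp add: seq_subspace_def z'_def)
    moreover have "\<bar>z' k\<bar> \<le> 1" for k
      using t_le[of k] z_le[of k] y_A[of k] by (cases "k \<in> A") (auto simp: z'_def)
    moreover have "\<forall>k\<in>insert k1 A. \<bar>z' k\<bar> = 1"
      using t_k1 z_A y_A by (simp add: z'_def)
    ultimately show ?thesis using A \<open>k1 \<notin> A\<close>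
      by (intro bexI[of _ z'] conjI exI[of _ "insert k1 A"]) auto
  qed
qed

lemma lorentz_sum_le_head_plus_tail:
  assumes "0 < p" and w: "is_lorentz_weight w" and x: "x \<in> lp_space p"
    and x_le: "\<And>k. \<bar>x k\<bar> \<le> 1"
  shows "(\<Sum>n. w n * decr_rearr x n powr p) \<le> real K + w K * (\<Sum>k. \<bar>x k\<bar> powr p)"
proof (rule suminf_le_const)
  show "summable (\<lambda>n. w n * decr_rearr x n powr p)"
    using lp_space_subset_lorentz_space[OF assms(1) w] x by (auto simp: lorentz_space_def)
  fix m
  obtain k0 where "\<And>k. \<bar>x k\<bar> \<le> \<bar>x k0\<bar>"
    using LIMSEQ_zero_imp_abs_attains_max[OF lp_space_imp_LIMSEQ_zero[OF assms(1) x]] by blast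
  then have decr_le: "0 \<le> decr_rearr x n" "decr_rearr x n \<le> 1" for n
    using decr_rearr_bounds x_le order_trans by blast+
  have term_le: "w n * decr_rearr x n powr p \<le> (if n < K then 1 else 0) + w K * decr_rearr x n powr p" for n
  proof (cases "n < K")
    case True
    have "w n * decr_rearr x n powr p \<le> 1"
      using lorentz_weight_nonneg[OF w, of n] lorentz_weight_le_1[OF w, of n] decr_le[of n] assms(1)
      by (intro mult_le_one powr_le1) auto
    moreover have "0 \<le> w K * decr_rearr x n powr p"
      using lorentz_weight_nonneg[OF w, of K] by simp
    ultimately show ?thesis using True by simp
  qed (simp add: mult_right_mono lorentz_weight_antimono[OF w])
  have "(\<Sum>n<m. w n * decr_rearr x n powr p)
      \<le> (\<Sum>n<m. (if n < K then 1 else 0) + w K * decr_rearr x n powr p)"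
    by (intro sum_mono term_le)
  also have "\<dots> = real (card ({..<m} \<inter> {..<K})) + w K * (\<Sum>n<m. decr_rearr x n powr p)"
    by (simp add: sum.distrib sum_distrib_left sum.If_cases lessThan_def)
  also have "\<dots> \<le> real K + w K * (\<Sum>k. \<bar>x k\<bar> powr p)"
    using sum_decr_rearr_powr_le_suminf[OF assms(1) x, of m] lorentz_weight_nonneg[OF w, of K]
      card_mono[of "{..<K}" "{..<m} \<inter> {..<K}"]
    by (intro add_mono mult_left_mono) auto
  finally show "(\<Sum>n<m. w n * decr_rearr x n powr p) \<le> real K + w K * (\<Sum>k. \<bar>x k\<bar> powr p)" .
qed

lemma lorentz_norm_less_of_many_peaks:
  assumes "0 < p" and w: "is_lorentz_weight w" and x: "x \<in> lp_space p"
    and x_le: "\<And>k. \<bar>x k\<bar> \<le> 1" and "finite A" and x_A: "\<And>k. k \<in> A \<Longrightarrow> \<bar>x k\<bar> = 1"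
    and "0 < \<epsilon>" and w_K: "w K < \<epsilon> powr p / 2" and K_A: "real K < \<epsilon> powr p / 2 * card A"
  shows "lorentz_norm w p x < \<epsilon> * lp_norm p x"
proof -
  define S where "S = (\<Sum>k. \<bar>x k\<bar> powr p)"
  define L where "L = (\<Sum>n. w n * decr_rearr x n powr p)"
  have "real (card A) = (\<Sum>k\<in>A. \<bar>x k\<bar> powr p)" using x_A by simp
  also have "\<dots> \<le> S"
    unfolding S_def using x \<open>finite A\<close> by (intro sum_le_suminf) (auto simp: lp_space_def)
  finally have A_S: "real (card A) \<le> S" .
  have "0 < \<epsilon> powr p / 2 * card A" using K_A of_nat_0_le_iff[of K] by linarith
  then have "0 < S" using A_S by (simp add: zero_less_mult_iff)
  have "L \<le> real K + w K * S"
    unfolding L_def S_def by (rule lorentz_sum_le_head_plus_tail[OF assms(1-4)])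
  also have "\<dots> < \<epsilon> powr p * S"
  proof -
    have "w K * S < \<epsilon> powr p / 2 * S" using w_K \<open>0 < S\<close> by simp
    moreover have "\<epsilon> powr p / 2 * card A \<le> \<epsilon> powr p / 2 * S"
      using A_S by (intro mult_left_mono) auto
    ultimately show ?thesis using K_A by linarith
  qed
  finally have "L < \<epsilon> powr p * S" .
  moreover have "0 \<le> L"
    unfolding L_def using lp_space_subset_lorentz_space[OF assms(1) w] x
    by (intro suminf_nonneg) (auto simp: lorentz_space_def lorentz_weight_nonneg[OF w])
  ultimately have "L powr (1/p) < (\<epsilon> powr p * S) powr (1/p)"
    using assms(1) by (intro powr_less_mono2) auto
  also have "\<dots> = \<epsilon> * S powr (1/p)"
    using \<open>0 < S\<close> \<open>0 < \<epsilon>\<close> assms(1) by (simp add: powr_mult powr_powr)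
  finally show ?thesis by (simp add: lorentz_norm_def lp_norm_def L_def S_def)
qed

theorem theorem4p3:
  fixes p :: real and w :: "nat \<Rightarrow> real"
  assumes "1 \<le> p" and "is_lorentz_weight w"
  shows "(\<forall>x\<in>lp_space p. x \<in> lorentz_space w p) \<and>
         fin_strictly_singular (lp_space p) (lp_norm p) (lorentz_norm w p) (\<lambda>x. x)"
proof
  have "0 < p" using assms(1) by simp
  show "\<forall>x\<in>lp_space p. x \<in> lorentz_space w p"
    using lp_space_subset_lorentz_space[OF \<open>0 < p\<close> assms(2)] by blast
  show "fin_strictly_singular (lp_space p) (lp_norm p) (lorentz_norm w p) (\<lambda>x. x)"
    unfolding fin_strictly_singular_def
  proof (intro allI impI)
    fix \<epsilon> :: real assume "\<epsilon> > 0"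
    then have "0 < \<epsilon> powr p / 2" by simp
    moreover have "w \<longlonglongrightarrow> 0" using assms(2) by (simp add: is_lorentz_weight_def)
    ultimately obtain K where w_K: "w K < \<epsilon> powr p / 2"
      by (metis order_tendstoD(2) eventually_sequentially order_refl)
    obtain N :: nat where "real K < \<epsilon> powr p / 2 * N"
      using reals_Archimedean3[OF \<open>0 < \<epsilon> powr p / 2\<close>] by (auto simp: mult.commute)
    show "\<exists>N. \<forall>Z. seq_subspace Z \<and> Z \<subseteq> lp_space p \<and> dim_at_least Z N \<longrightarrow>
          (\<exists>z\<in>Z. lorentz_norm w p z < \<epsilon> * lp_norm p z)"
    proof (intro exI[of _ N] allI impI)
      fix Z assume Z: "seq_subspace Z \<and> Z \<subseteq> lp_space p \<and> dim_at_least Z N"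
      then obtain z A where "z \<in> Z" "\<And>k. \<bar>z k\<bar> \<le> 1" "finite A" "card A = N" "\<And>k. k \<in> A \<Longrightarrow> \<bar>z k\<bar> = 1"
        using exists_vector_with_peaks[OF \<open>0 < p\<close>, of Z N N] by auto
      then show "\<exists>z\<in>Z. lorentz_norm w p z < \<epsilon> * lp_norm p z"
        using lorentz_norm_less_of_many_peaks[OF \<open>0 < p\<close> assms(2), of z A \<epsilon> K] Z w_K
          \<open>real K < _\<close> \<open>\<epsilon> > 0\<close> by blast
    qed
  qed
qed

end
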